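(* Let $\mathbb{A}$ be a Boolean algebra and $(\mathbb{B},\mu)$ a metric Boolean algebra. Let $(\varphi_n)$ be a sequence in $\mathcal{H}(\mathbb{A},\mathbb{B})$ converging pointwise metric to $\varphi\in\mathcal{H}(\mathbb{A},\mathbb{B})$. If the sequence $(\widehat{\mu}\circ f_{\varphi_n}^{-1})$ of Radon measures on $St(\mathbb{A})$ is uniformly countably additive, then $(\varphi_n)$ converges pointwise Borel metric to $\varphi$.
   Context: A metric Boolean algebra $(\mathbb{B},\mu)$ is a Boolean algebra with a strictly positive finitely additive probability measure $\mu$; $d_\mu(A,B)=\mu(A\triangle B)$. $\mathcal{H}(\mathbb{A},\mathbb{B})$ is the set of homomorphisms $\mathbb{A}\to\mathbb{B}$. Algebras are identified with clopen algebras of their Stone spaces $St(\cdot)$; $\widehat{\mu}$ is the unique Radon extension of $\mu$ to $St(\mathbb{B})$; $f_\varphi\colon St(\mathbb{B})\to St(\mathbb{A})$, $f_\varphi(x)=\varphi^{-1}[x]$. $(\varphi_n)$ converges pointwise metric to $\varphi$ if $d_\mu(\varphi_n(A),\varphi(A))\to0$ for each $A\in\mathbb{A}$; pointwise Borel metric if $\widehat{\mu}(f_{\varphi_n}^{-1}[B]\triangle f_\varphi^{-1}[B])\to0$ for every Borel $B\subseteq St(\mathbb{A})$. A sequence $(\mu_k)$ of Radon measures on a compact space $K$ is uniformly countably additive if for every decreasing sequence $(E_n)$ of Borel subsets of $K$ with $\bigcap_nE_n=\emptyset$ and every $\varepsilon>0$ there is $N$ with $|\mu_k(E_n)|<\varepsilon$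 for all $n\ge N$ and all $k$. *)

theory Defs
  imports "HOL-Analysis.Analysis"
begin

definition bool_hom :: "('a::boolean_algebra \<Rightarrow> 'b::boolean_algebra) \<Rightarrow> bool" where
  "bool_hom \<phi> \<longleftrightarrow>
     (\<forall>a b. \<phi> (inf a b) = inf (\<phi> a) (\<phi> b)) \<and>
     (\<forall>a b. \<phi> (sup a b) = sup (\<phi> a) (\<phi> b)) \<and>
     (\<forall>a. \<phi> (- a) = - \<phi> a) \<and> \<phi> bot = bot \<and> \<phi> top = top"

definition metric_ba :: "('b::boolean_algebra \<Rightarrow> real) \<Rightarrow> bool" where
  "metric_ba \<mu> \<longleftrightarrow>
     (\<forall>b. 0 \<le> \<mu> b) \<and> \<mu> top = 1 \<and>
     (\<forall>b. b \<noteq> bot \<longrightarrow> 0 < \<mu> b) \<and>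
     (\<forall>a b. inf a b = bot \<longrightarrow> \<mu> (sup a b) = \<mu> a + \<mu> b)"

definition ba_symdiff :: "'b::boolean_algebra \<Rightarrow> 'b \<Rightarrow> 'b" where
  "ba_symdiff a b = sup (a - b) (b - a)"

definition d_mu :: "('b::boolean_algebra \<Rightarrow> real) \<Rightarrow> 'b \<Rightarrow> 'b \<Rightarrow> real" where
  "d_mu \<mu> a b = \<mu> (ba_symdiff a b)"

definition stone_space :: "'a::boolean_algebra set set" where
  "stone_space = {U. top \<in> U \<and> bot \<notin> U \<and>
      (\<forall>a b. a \<in> U \<and> b \<in> U \<longrightarrow> inf a b \<in> U) \<and>
      (\<forall>a b. a \<in> U \<and> a \<le> b \<longrightarrow> b \<in> U) \<and>
      (\<forall>a. a \<in> U \<or> - a \<in> U)}"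

definition stone_clopen :: "'a::boolean_algebra \<Rightarrow> 'a set set" where
  "stone_clopen a = {U \<in> stone_space. a \<in> U}"

definition stone_top :: "'a::boolean_algebra set topology" where
  "stone_top = topology_generated_by (range stone_clopen)"

definition borel_sets_of :: "'x topology \<Rightarrow> 'x set set" where
  "borel_sets_of X = sigma_sets (topspace X) {U. openin X U}"

definition radon_on :: "'x topology \<Rightarrow> 'x measure \<Rightarrow> bool" where
  "radon_on X M \<longleftrightarrow> space M = topspace X \<and> sets M = borel_sets_of X \<and>
     emeasure M (space M) < \<infinity> \<and>
     (\<forall>E \<in> sets M. measure M E = (SUP K \<in> {K. compactin X K \<and> K \<subseteq> E}. measure M K))"

definition radon_ext :: "('b::boolean_algebra \<Rightarrow> real) \<Rightarrow> 'b set measure" where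
  "radon_ext \<mu> = (THE M. radon_on stone_top M \<and>
                         (\<forall>b. measure M (stone_clopen b) = \<mu> b))"

definition stone_map :: "('a::boolean_algebra \<Rightarrow> 'b::boolean_algebra) \<Rightarrow> 'b set \<Rightarrow> 'a set" where
  "stone_map \<phi> x = {a. \<phi> a \<in> x}"

definition stone_preimage ::
  "('a::boolean_algebra \<Rightarrow> 'b::boolean_algebra) \<Rightarrow> 'a set set \<Rightarrow> 'b set set" where
  "stone_preimage \<phi> E = {x \<in> stone_space. stone_map \<phi> x \<in> E}"

definition pointwise_metric_conv ::
  "('b::boolean_algebra \<Rightarrow> real) \<Rightarrow> (nat \<Rightarrow> 'a::boolean_algebra \<Rightarrow> 'b) \<Rightarrow> ('a \<Rightarrow> 'b) \<Rightarrow> bool" where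
  "pointwise_metric_conv \<mu> \<phi>s \<phi> \<longleftrightarrow> (\<forall>a. (\<lambda>n. d_mu \<mu> (\<phi>s n a) (\<phi> a)) \<longlonglongrightarrow> 0)"

definition pointwise_borel_metric_conv ::
  "('b::boolean_algebra \<Rightarrow> real) \<Rightarrow> (nat \<Rightarrow> 'a::boolean_algebra \<Rightarrow> 'b) \<Rightarrow> ('a \<Rightarrow> 'b) \<Rightarrow> bool" where
  "pointwise_borel_metric_conv \<mu> \<phi>s \<phi> \<longleftrightarrow>
     (\<forall>E \<in> borel_sets_of (stone_top :: 'a set topology).
        (\<lambda>n. measure (radon_ext \<mu>)
               ((stone_preimage (\<phi>s n) E - stone_preimage \<phi> E) \<union>
                (stone_preimage \<phi> E - stone_preimage (\<phi>s n) E))) \<longlonglongrightarrow> 0)"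

definition unif_countably_additive :: "'x topology \<Rightarrow> (nat \<Rightarrow> 'x set \<Rightarrow> real) \<Rightarrow> bool" where
  "unif_countably_additive X \<nu> \<longleftrightarrow>
     (\<forall>E :: nat \<Rightarrow> 'x set. (\<forall>n. E n \<in> borel_sets_of X) \<and> decseq E \<and> (\<Inter>n. E n) = {} \<longrightarrow>
        (\<forall>\<epsilon>>0. \<exists>N. \<forall>n\<ge>N. \<forall>k. \<bar>\<nu> k (E n)\<bar> < \<epsilon>))"

end

theory Submission
  imports Defs
begin

text \<open>Write f n and f for the dual maps St(B) \<rightarrow> St(A) of \<phi>s n and \<phi>, and call a Borel set E
  good if the measure of the symmetric difference of the preimages of E under f n and f tends to 0.
  Pointwise metric convergence says that clopen sets are good. Good sets are closed under
  complements, and under countable unions: the part of a union outside its first k members is a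
  decreasing sequence with empty intersection, whose preimages are small uniformly in n by
  uniform countable additivity. An open set U is, up to sets whose preimages under all the
  countably many maps are null, a countable union of clopen sets, because the Radon measure of the
  preimage of U is the supremum over the clopen sets inside U. Hence open sets are good, and so
  is every Borel set.

  The Radon extension, whose existence and uniqueness the statement presupposes, is the outer
  measure generated by the open sets, each measured from inside by the clopen sets it contains;
  compactness of the Stone space makes it countably additive and unique.\<close>

section \<open>Ultrafilters and clopen sets\<close>

lemma stone_space_top: "U \<in> stone_space \<Longrightarrow> top \<in> U"
  and stone_space_bot: "U \<in> stone_space \<Longrightarrow> bot \<notin> U"
  and stone_space_upward: "U \<in> stone_space \<Longrightarrow> a \<in> U \<Longrightarrow> a \<le> b \<Longrightarrow> b \<in> U"
  by (auto simp: stone_space_def)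

lemma stone_space_inf_iff: "U \<in> stone_space \<Longrightarrow> inf a b \<in> U \<longleftrightarrow> a \<in> U \<and> b \<in> U"
  unfolding stone_space_def by (metis (mono_tags, lifting) inf_le1 inf_le2 mem_Collect_eq)

lemma stone_space_compl_iff: "U \<in> stone_space \<Longrightarrow> - a \<in> U \<longleftrightarrow> a \<notin> U"
  using stone_space_inf_iff[of U a "- a"] stone_space_bot[of U]
  by (auto simp: stone_space_def)

lemma stone_space_sup_iff: "U \<in> stone_space \<Longrightarrow> sup a b \<in> U \<longleftrightarrow> a \<in> U \<or> b \<in> U"
  using stone_space_inf_iff[of U "- a" "- b"] stone_space_compl_iff[of U]
  by (metis compl_inf double_compl)

definition proper_filter :: "'a::boolean_algebra set \<Rightarrow> bool" where
  "proper_filter F \<longleftrightarrow> top \<in> F \<and> bot \<notin> F \<and> (\<forall>a b. a \<in> F \<and> b \<in> F \<longrightarrow> inf a b \<in> F) \<and>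
     (\<forall>a b. a \<in> F \<and> a \<le> b \<longrightarrow> b \<in> F)"

lemma proper_filterD:
  assumes "proper_filter F"
  shows "top \<in> F" "bot \<notin> F" "a \<in> F \<Longrightarrow> b \<in> F \<Longrightarrow> inf a b \<in> F" "a \<in> F \<Longrightarrow> a \<le> b \<Longrightarrow> b \<in> F"
  using assms unfolding proper_filter_def by blast+

lemma stone_space_iff_proper_filter:
  "U \<in> stone_space \<longleftrightarrow> proper_filter U \<and> (\<forall>a. a \<in> U \<or> - a \<in> U)"
  by (simp add: stone_space_def proper_filter_def)

lemma proper_filter_Union_chain:
  assumes "C \<noteq> {}" "\<And>F. F \<in> C \<Longrightarrow> proper_filter F" "subset.chain UNIV C"
  shows "proper_filter (\<Union>C)"
  unfolding proper_filter_def
proof (intro conjI allI impI)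
  show "top \<in> \<Union>C" using assms(1) proper_filterD(1)[OF assms(2)] by blast
  show "bot \<notin> \<Union>C" using proper_filterD(2)[OF assms(2)] by blast
next
  fix a b assume "a \<in> \<Union>C \<and> b \<in> \<Union>C"
  then obtain F G where FG: "F \<in> C" "G \<in> C" "a \<in> F" "b \<in> G" by blast
  from assms(3) have "\<forall>X\<in>C. \<forall>Y\<in>C. X \<subseteq> Y \<or> Y \<subseteq> X" by (simp add: subset_chain_def)
  with FG have "a \<in> F \<and> b \<in> F \<or> a \<in> G \<and> b \<in> G" by blast
  then show "inf a b \<in> \<Union>C" using FG(1,2) proper_filterD(3)[OF assms(2)] by blast
next
  fix a b assume "a \<in> \<Union>C \<and> a \<le> b"
  then show "b \<in> \<Union>C" using proper_filterD(4)[OF assms(2)] by blast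
qed

lemma proper_filter_adjoin:
  assumes U: "proper_filter U" and a: "- a \<notin> U"
  shows "proper_filter {x. \<exists>u\<in>U. inf u a \<le> x}" (is "proper_filter ?G")
  unfolding proper_filter_def
proof (intro conjI allI impI)
  show "top \<in> ?G" using proper_filterD(1)[OF U] by auto
  have "u \<le> - a" if "inf u a \<le> bot" for u
    using that by (simp add: inf_shunt bot_unique)
  then show "bot \<notin> ?G" using proper_filterD(4)[OF U] a by blast
next
  fix x y assume "x \<in> ?G \<and> y \<in> ?G"
  then obtain u v where uv: "u \<in> U" "v \<in> U" "inf u a \<le> x" "inf v a \<le> y" by blast
  have "inf (inf u v) a \<le> inf u a" "inf (inf u v) a \<le> inf v a"
    by (intro inf_mono; simp)+
  then have "inf (inf u v) a \<le> inf x y"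
    using uv(3,4) by (meson le_inf_iff order_trans)
  moreover have "inf u v \<in> U" using uv proper_filterD(3)[OF U] by blast
  ultimately show "inf x y \<in> ?G" by blast
next
  fix x y assume xy: "x \<in> ?G \<and> x \<le> y"
  then obtain u where "u \<in> U" "inf u a \<le> x" by blast
  with xy show "y \<in> ?G" using order_trans by blast
qed

text \<open>By Zorn's lemma there is a maximal proper filter above F; it is an ultrafilter,
  since adjoining an element a with a, -a outside it would enlarge it.\<close>

lemma proper_filter_extends_to_ultrafilter:
  assumes "proper_filter F"
  obtains U where "U \<in> stone_space" "F \<subseteq> U"
proof -
  let ?A = "{G. proper_filter G \<and> F \<subseteq> G}"
  have "\<exists>M\<in>?A. \<forall>X\<in>?A. M \<subseteq> X \<longrightarrow> X = M"
  proof (rule subset_Zorn_nonempty)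
    fix C assume C: "C \<noteq> {}" "subset.chain ?A C"
    then have CA: "C \<subseteq> ?A" and "subset.chain UNIV C" by (simp_all add: subset_chain_def)
    then have "proper_filter (\<Union>C)" using C(1) by (intro proper_filter_Union_chain) auto
    moreover have "F \<subseteq> \<Union>C" using C(1) CA by blast
    ultimately show "\<Union>C \<in> ?A" by blast
  next
    show "?A \<noteq> {}" using assms by blast
  qed
  then obtain U where UA: "U \<in> ?A" and max: "\<forall>X\<in>?A. U \<subseteq> X \<longrightarrow> X = U" ..
  from UA have U: "proper_filter U" "F \<subseteq> U" by simp_all
  have "a \<in> U \<or> - a \<in> U" for a
  proof (rule ccontr)
    assume a: "\<not> (a \<in> U \<or> - a \<in> U)"
    let ?G = "{x. \<exists>u\<in>U. inf u a \<le> x}"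
    have UG: "U \<subseteq> ?G" using inf_le1 by blast
    with U a have "?G \<in> ?A" using proper_filter_adjoin[OF U(1)] by blast
    then have "?G = U" using max UG by blast
    moreover have "a \<in> ?G" using proper_filterD(1)[OF U(1)] inf_le2 by blast
    ultimately show False using a by blast
  qed
  then have "U \<in> stone_space" using U(1) by (simp add: stone_space_iff_proper_filter)
  then show thesis using U(2) by (rule that)
qed

text \<open>A form of the Boolean prime ideal theorem: the filter generated by c and the complements
  of the elements of A is proper.\<close>

lemma ultrafilter_avoiding_sup_closed:
  fixes c :: "'a::boolean_algebra"
  assumes "A \<noteq> {}" "\<And>a b. a \<in> A \<Longrightarrow> b \<in> A \<Longrightarrow> sup a b \<in> A" "\<And>a. a \<in> A \<Longrightarrow> \<not> c \<le> a"
  obtains U where "U \<in> stone_space" "c \<in> U" "A \<inter> U = {}"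
proof -
  let ?F = "{x. \<exists>a\<in>A. inf c (- a) \<le> x}"
  have meet: "inf c (- sup a b) \<le> inf x y" if "inf c (- a) \<le> x" "inf c (- b) \<le> y" for a b x y :: 'a
  proof -
    have "inf c (- sup a b) \<le> inf c (- a)" "inf c (- sup a b) \<le> inf c (- b)"
      by (auto intro: inf_mono le_infI2)
    with that show ?thesis by (meson le_inf_iff order_trans)
  qed
  have proper: "\<not> inf c (- a) \<le> bot" if "a \<in> A" for a
    using assms(3)[OF that] by (simp add: shunt2)
  have "proper_filter ?F"
    unfolding proper_filter_def
  proof (intro conjI allI impI)
    show "top \<in> ?F" using assms(1) by auto
    show "bot \<notin> ?F" using proper by blast
  next
    fix x y assume "x \<in> ?F \<and> y \<in> ?F"
    then obtain a b where "a \<in> A" "b \<in> A" "inf c (- a) \<le> x" "inf c (- b) \<le> y" by blast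
    then show "inf x y \<in> ?F" using meet assms(2) by blast
  next
    fix x y assume xy: "x \<in> ?F \<and> x \<le> y"
    then obtain a where "a \<in> A" "inf c (- a) \<le> x" by blast
    with xy show "y \<in> ?F" using order_trans by blast
  qed
  then obtain U where U: "U \<in> stone_space" "?F \<subseteq> U"
    by (rule proper_filter_extends_to_ultrafilter)
  have "c \<in> ?F" using assms(1) inf_le1 by blast
  then have "c \<in> U" using U(2) by blast
  moreover have "a \<notin> U" if "a \<in> A" for a
  proof -
    have "inf c (- a) \<in> ?F" using that order_refl by blast
    then have "- a \<in> U" using U stone_space_inf_iff by blast
    then show ?thesis using U(1) stone_space_compl_iff by blast
  qed
  ultimately show thesis using U(1) that by blast
qed

abbreviation cl :: "'a::boolean_algebra \<Rightarrow> 'a set set" where "cl \<equiv> stone_clopen"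

lemma stone_clopen_subset: "cl a \<subseteq> stone_space"
  by (auto simp: stone_clopen_def)

lemma stone_clopen_inf: "cl (inf a b) = cl a \<inter> cl b"
  and stone_clopen_sup: "cl (sup a b) = cl a \<union> cl b"
  and stone_clopen_compl: "cl (- a) = stone_space - cl a"
  and stone_clopen_diff: "cl (a - b) = cl a - cl b"
  and stone_clopen_bot [simp]: "cl bot = {}"
  and stone_clopen_top [simp]: "cl top = stone_space"
  by (auto simp: stone_clopen_def stone_space_inf_iff stone_space_sup_iff stone_space_compl_iff
      diff_eq stone_space_bot stone_space_top)

lemma stone_clopen_subset_iff: "cl a \<subseteq> cl b \<longleftrightarrow> a \<le> b"
proof
  assume sub: "cl a \<subseteq> cl b"
  show "a \<le> b"
  proof (rule ccontr)
    assume "\<not> a \<le> b"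
    have "\<exists>U\<in>stone_space. a \<in> U \<and> {b} \<inter> U = {}"
      by (rule ultrafilter_avoiding_sup_closed[of "{b}" a]) (use \<open>\<not> a \<le> b\<close> in auto)
    with sub show False by (auto simp: stone_clopen_def)
  qed
qed (use stone_space_upward in \<open>auto simp: stone_clopen_def\<close>)

lemma stone_clopen_eq_iff: "cl a = cl b \<longleftrightarrow> a = b"
  by (metis stone_clopen_subset_iff order_antisym order_refl)

section \<open>The Stone topology\<close>

lemma topspace_stone_top [simp]: "topspace (stone_top :: 'a::boolean_algebra set topology) = stone_space"
proof -
  have "\<Union>(range (cl :: 'a \<Rightarrow> _)) = stone_space"
    using stone_clopen_subset stone_clopen_top by blast
  then show ?thesis unfolding stone_top_def by simp
qed

lemma openin_stone_top:
  "openin stone_top U \<longleftrightarrow> U \<subseteq> stone_space \<and> (\<forall>x\<in>U. \<exists>a. x \<in> cl a \<and> cl a \<subseteq> U)"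
proof
  assume U: "openin stone_top U"
  then have "generate_topology_on (range cl) U"
    unfolding stone_top_def by (simp add: openin_topology_generated_by_iff)
  then have "\<forall>x\<in>U. \<exists>a. x \<in> cl a \<and> cl a \<subseteq> U"
  proof (induction rule: generate_topology_on.induct)
    case (Int V W)
    show ?case
    proof
      fix x assume "x \<in> V \<inter> W"
      then obtain a b where "x \<in> cl a" "cl a \<subseteq> V" "x \<in> cl b" "cl b \<subseteq> W" using Int.IH by blast
      then show "\<exists>c. x \<in> cl c \<and> cl c \<subseteq> V \<inter> W"
        by (intro exI[of _ "inf a b"]) (auto simp: stone_clopen_inf)
    qed
  qed blast+
  with openin_subset[OF U] show "U \<subseteq> stone_space \<and> (\<forall>x\<in>U. \<exists>a. x \<in> cl a \<and> cl a \<subseteq> U)"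
    by simp
next
  assume "U \<subseteq> stone_space \<and> (\<forall>x\<in>U. \<exists>a. x \<in> cl a \<and> cl a \<subseteq> U)"
  then have "U = \<Union>{cl a | a. cl a \<subseteq> U}" by blast
  moreover have "generate_topology_on (range cl) (\<Union>{cl a | a. cl a \<subseteq> U})"
    by (rule generate_topology_on.UN) (auto intro: generate_topology_on.Basis)
  ultimately show "openin stone_top U"
    unfolding stone_top_def by (simp add: openin_topology_generated_by_iff)
qed

lemma openin_stone_clopen: "openin stone_top (cl a)"
  unfolding openin_stone_top using stone_clopen_subset by blast

lemma closedin_stone_clopen: "closedin stone_top (cl a)"
  unfolding closedin_def using openin_stone_clopen[of "- a"] stone_clopen_subset
  by (simp add: stone_clopen_compl)

lemma compactin_subset_directed_Union:
  assumes "compactin X K" "\<And>U. U \<in> \<U> \<Longrightarrow> openin X U" "\<U> \<noteq> {}"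
    and "\<And>U V. U \<in> \<U> \<Longrightarrow> V \<in> \<U> \<Longrightarrow> U \<union> V \<in> \<U>" and "K \<subseteq> \<Union>\<U>"
  obtains U where "U \<in> \<U>" "K \<subseteq> U"
proof -
  obtain \<F> where \<F>: "finite \<F>" "\<F> \<subseteq> \<U>" "K \<subseteq> \<Union>\<F>"
    using compactinD[OF assms(1,2,5)] by blast
  have "\<exists>U\<in>\<U>. \<Union>\<F> \<subseteq> U" using \<F>(1,2)
  proof (induction \<F> rule: finite_induct)
    case empty then show ?case using assms(3) by blast
  next
    case (insert V \<F>)
    then have V: "V \<in> \<U>" and "\<F> \<subseteq> \<U>" by simp_all
    from insert.IH[OF this(2)] obtain U where U: "U \<in> \<U>" "\<Union>\<F> \<subseteq> U" ..
    have "V \<union> U \<in> \<U>" by (rule assms(4)[OF V U(1)])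
    moreover have "\<Union>(insert V \<F>) \<subseteq> V \<union> U" using U(2) by auto
    ultimately show ?case ..
  qed
  then obtain U where U: "U \<in> \<U>" "\<Union>\<F> \<subseteq> U" ..
  from \<F>(3) U(2) have "K \<subseteq> U" by (rule subset_trans)
  with U(1) show thesis by (rule that)
qed

lemma compactin_subset_UN_lessThan:
  fixes U :: "nat \<Rightarrow> 'a set"
  assumes "compactin X K" "\<And>i. openin X (U i)" "K \<subseteq> (\<Union>i. U i)"
  obtains n where "K \<subseteq> (\<Union>i<n. U i)"
proof -
  have "\<exists>\<F>. finite \<F> \<and> \<F> \<subseteq> range U \<and> K \<subseteq> \<Union>\<F>"
    by (rule compactinD[OF assms(1)]) (use assms(2,3) in auto)
  then obtain \<F> where \<F>: "finite \<F>" "\<F> \<subseteq> range U" "K \<subseteq> \<Union>\<F>" by blast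
  obtain I where I: "finite I" "\<F> = U ` I" using finite_subset_image[OF \<F>(1,2)] by blast
  obtain n where "I \<subseteq> {..<n}" using finite_nat_bounded[OF I(1)] by blast
  with \<F>(3) I(2) have "K \<subseteq> (\<Union>i<n. U i)" by blast
  then show thesis by (rule that)
qed

lemma compact_space_stone_top: "compact_space (stone_top :: 'a::boolean_algebra set topology)"
  unfolding compact_space_def compactin_def
proof (intro conjI allI impI)
  fix \<U> :: "'a set set set"
  assume \<U>: "(\<forall>B\<in>\<U>. openin stone_top B) \<and> topspace stone_top \<subseteq> \<Union>\<U>"
  let ?A = "{a. \<exists>\<F>. finite \<F> \<and> \<F> \<subseteq> \<U> \<and> cl a \<subseteq> \<Union>\<F>}"
  have "\<exists>a\<in>?A. top \<le> a"
  proof (rule ccontr)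
    assume no_top: "\<not> (\<exists>a\<in>?A. top \<le> a)"
    have "bot \<in> ?A" by (intro CollectI exI[of _ "{}"]) simp
    then have "?A \<noteq> {}" by blast
    moreover have "sup a b \<in> ?A" if "a \<in> ?A" "b \<in> ?A" for a b
    proof -
      from that obtain \<F> \<G> where "finite \<F>" "\<F> \<subseteq> \<U>" "cl a \<subseteq> \<Union>\<F>" "finite \<G>" "\<G> \<subseteq> \<U>" "cl b \<subseteq> \<Union>\<G>"
        by blast
      then show ?thesis by (intro CollectI exI[of _ "\<F> \<union> \<G>"]) (auto simp: stone_clopen_sup)
    qed
    moreover have "\<not> top \<le> a" if "a \<in> ?A" for a using no_top that by blast
    ultimately obtain U where U: "U \<in> stone_space" "?A \<inter> U = {}"
      by (rule ultrafilter_avoiding_sup_closed)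
    then obtain B where B: "B \<in> \<U>" "U \<in> B" using \<U> by auto
    then have "openin stone_top B" using \<U> by blast
    with B(2) obtain a where "U \<in> cl a" "cl a \<subseteq> B" unfolding openin_stone_top by blast
    then have "a \<in> U" "a \<in> ?A"
      using B(1) by (auto simp: stone_clopen_def intro!: exI[of _ "{B}"])
    with U(2) show False by blast
  qed
  then obtain a \<F> where "finite \<F>" "\<F> \<subseteq> \<U>" "cl a \<subseteq> \<Union>\<F>" "top \<le> a"
    by blast
  moreover from \<open>top \<le> a\<close> have "a = top" by (rule top_unique[THEN iffD1])
  ultimately show "\<exists>\<F>. finite \<F> \<and> \<F> \<subseteq> \<U> \<and> topspace stone_top \<subseteq> \<Union>\<F>" by auto
qed simp

lemma compactin_stone_clopen: "compactin stone_top (cl a)"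
  by (rule closedin_compact_space[OF compact_space_stone_top closedin_stone_clopen])

lemma compactin_subset_clopen:
  assumes "compactin stone_top K" "A \<noteq> {}" "\<And>a b. a \<in> A \<Longrightarrow> b \<in> A \<Longrightarrow> sup a b \<in> A"
    and "K \<subseteq> (\<Union>a\<in>A. cl a)"
  obtains a where "a \<in> A" "K \<subseteq> cl a"
proof -
  have union: "U \<union> V \<in> cl ` A" if "U \<in> cl ` A" "V \<in> cl ` A" for U V
    using that assms(3) by (auto simp: stone_clopen_sup[symmetric])
  have nonempty: "cl ` A \<noteq> {}" using assms(2) by blast
  obtain U where "U \<in> cl ` A" "K \<subseteq> U"
    by (rule compactin_subset_directed_Union[OF assms(1) _ nonempty union assms(4)])
      (auto intro: openin_stone_clopen)
  then show thesis using that by blast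
qed

lemma stone_clopen_subset_Un_open:
  assumes U: "openin stone_top U" and V: "openin stone_top V" and c: "cl c \<subseteq> U \<union> V"
  obtains a where "cl a \<subseteq> U" "cl (c - a) \<subseteq> V"
proof -
  have "closedin stone_top (cl c - V)" by (rule closedin_diff[OF closedin_stone_clopen V])
  then have K: "compactin stone_top (cl c - V)" by (rule closedin_compact_space[OF compact_space_stone_top])
  have nonempty: "{a. cl a \<subseteq> U} \<noteq> {}" by (auto intro!: exI[of _ bot])
  have sup_closed: "sup a b \<in> {a. cl a \<subseteq> U}" if "a \<in> {a. cl a \<subseteq> U}" "b \<in> {a. cl a \<subseteq> U}" for a b
    using that by (simp add: stone_clopen_sup)
  have cover: "cl c - V \<subseteq> (\<Union>a\<in>{a. cl a \<subseteq> U}. cl a)" using c U unfolding openin_stone_top by blast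
  obtain a where "a \<in> {a. cl a \<subseteq> U}" "cl c - V \<subseteq> cl a"
    by (rule compactin_subset_clopen[OF K nonempty sup_closed cover])
  moreover from this(2) have "cl (c - a) \<subseteq> V" by (auto simp: stone_clopen_diff)
  ultimately show thesis using that by blast
qed

lemma openin_stone_borel: "openin stone_top U \<Longrightarrow> U \<in> borel_sets_of stone_top"
  by (simp add: borel_sets_of_def sigma_sets.Basic)

definition stone_borel :: "'a::boolean_algebra set measure" where
  "stone_borel = sigma stone_space {U. openin stone_top U}"

lemma openin_stone_top_subset_Pow: "{U. openin stone_top U} \<subseteq> Pow stone_space"
  using openin_subset[of stone_top] by auto

lemma sets_stone_borel: "sets stone_borel = borel_sets_of stone_top"
  by (simp add: stone_borel_def borel_sets_of_def openin_stone_top_subset_Pow)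

lemma space_stone_borel: "space stone_borel = stone_space"
  by (simp add: stone_borel_def openin_stone_top_subset_Pow)

lemma sigma_algebra_stone_borel:
  "sigma_algebra stone_space (borel_sets_of (stone_top :: 'a::boolean_algebra set topology))"
  using sets.sigma_algebra_axioms[of "stone_borel :: 'a set measure"]
  by (simp add: sets_stone_borel space_stone_borel)

section \<open>The dual map\<close>

lemma stone_map_in_stone_space:
  assumes "bool_hom \<psi>" "x \<in> stone_space"
  shows "stone_map \<psi> x \<in> stone_space"
proof -
  have hom: "\<And>a b. \<psi> (inf a b) = inf (\<psi> a) (\<psi> b)" "\<And>a. \<psi> (- a) = - \<psi> a" "\<psi> top = top" "\<psi> bot = bot"
    using assms(1) by (auto simp: bool_hom_def)
  have upward: "\<psi> b \<in> x" if "\<psi> a \<in> x" "a \<le> b" for a b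
  proof -
    have "\<psi> a \<le> \<psi> b" using that(2) hom(1) by (metis inf.absorb_iff1)
    with that(1) show ?thesis by (rule stone_space_upward[OF assms(2)])
  qed
  show ?thesis
    unfolding stone_map_def stone_space_def
    using stone_space_top[OF assms(2)] stone_space_bot[OF assms(2)] stone_space_inf_iff[OF assms(2)]
      stone_space_compl_iff[OF assms(2)] upward
    by (simp add: hom) blast
qed

lemma stone_preimage_eq_vimage: "stone_preimage \<psi> E = stone_map \<psi> -` E \<inter> stone_space"
  by (auto simp: stone_preimage_def)

lemma stone_preimage_clopen:
  assumes "bool_hom \<psi>"
  shows "stone_preimage \<psi> (cl a) = cl (\<psi> a)"
  using stone_map_in_stone_space[OF assms]
  by (auto simp: stone_preimage_def stone_clopen_def stone_map_def)

lemma openin_stone_preimage: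
  assumes "bool_hom \<psi>" "openin stone_top U"
  shows "openin stone_top (stone_preimage \<psi> U)"
  unfolding openin_stone_top
proof (intro conjI ballI)
  show "stone_preimage \<psi> U \<subseteq> stone_space" by (auto simp: stone_preimage_def)
  fix x assume x: "x \<in> stone_preimage \<psi> U"
  then have "stone_map \<psi> x \<in> U" by (simp add: stone_preimage_def)
  then obtain a where "stone_map \<psi> x \<in> cl a" "cl a \<subseteq> U"
    using assms(2) unfolding openin_stone_top by blast
  with x show "\<exists>b. x \<in> cl b \<and> cl b \<subseteq> stone_preimage \<psi> U"
    using stone_preimage_clopen[OF assms(1), of a]
    by (intro exI[of _ "\<psi> a"]) (auto simp: stone_preimage_def)
qed

lemma measurable_stone_map:
  assumes "bool_hom \<psi>"
  shows "stone_map \<psi> \<in> stone_borel \<rightarrow>\<^sub>M stone_borel"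
  unfolding stone_borel_def
proof (rule measurable_measure_of)
  fix U :: "'a set set" assume "U \<in> {U. openin stone_top U}"
  then have "openin stone_top (stone_map \<psi> -` U \<inter> stone_space)"
    using openin_stone_preimage[OF assms] by (simp add: stone_preimage_eq_vimage)
  then show "stone_map \<psi> -` U \<inter> space (sigma stone_space {U. openin stone_top U}) \<in>
      sets (sigma stone_space {U. openin stone_top U})"
    by (simp add: openin_stone_top_subset_Pow sigma_sets.Basic)
qed (use stone_map_in_stone_space[OF assms] in
    \<open>auto simp: space_measure_of[OF openin_stone_top_subset_Pow] openin_stone_top_subset_Pow\<close>)

lemma compactin_subset_stone_preimage_open:
  assumes \<psi>: "bool_hom \<psi>" and U: "openin stone_top U"
    and K: "compactin stone_top K" "K \<subseteq> stone_preimage \<psi> U"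
  obtains a where "cl a \<subseteq> U" "K \<subseteq> cl (\<psi> a)"
proof -
  let ?A = "\<psi> ` {a. cl a \<subseteq> U}"
  have cover: "K \<subseteq> (\<Union>b\<in>?A. cl b)"
  proof
    fix x assume "x \<in> K"
    then have x: "x \<in> stone_space" "stone_map \<psi> x \<in> U" using K(2) by (auto simp: stone_preimage_def)
    then obtain a where "stone_map \<psi> x \<in> cl a" "cl a \<subseteq> U" using U unfolding openin_stone_top by blast
    moreover from this(1) x(1) have "x \<in> cl (\<psi> a)"
      by (simp add: stone_preimage_clopen[OF \<psi>, symmetric] stone_preimage_def)
    ultimately show "x \<in> (\<Union>b\<in>?A. cl b)" by blast
  qed
  have nonempty: "?A \<noteq> {}" by (auto intro!: exI[of _ bot])
  have sup_closed: "sup b c \<in> ?A" if "b \<in> ?A" "c \<in> ?A" for b c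
  proof -
    from that obtain a a' where "cl a \<subseteq> U" "cl a' \<subseteq> U" "b = \<psi> a" "c = \<psi> a'" by blast
    moreover from this have "sup b c = \<psi> (sup a a')" using \<psi> by (simp add: bool_hom_def)
    ultimately show ?thesis by (auto simp: stone_clopen_sup)
  qed
  obtain b where "b \<in> ?A" "K \<subseteq> cl b"
    by (rule compactin_subset_clopen[OF K(1) nonempty sup_closed cover])
  then show thesis using that by blast
qed

section \<open>Construction of the Radon extension\<close>

context
  fixes \<mu> :: "'b::boolean_algebra \<Rightarrow> real"
  assumes \<mu>: "metric_ba \<mu>"
begin

lemma metric_ba_nonneg: "0 \<le> \<mu> a"
  and metric_ba_top: "\<mu> top = 1"
  and metric_ba_add: "inf a b = bot \<Longrightarrow> \<mu> (sup a b) = \<mu> a + \<mu> b"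
  using \<mu> by (simp_all add: metric_ba_def)

lemma metric_ba_sup_diff: "\<mu> (sup a (b - a)) = \<mu> a + \<mu> (b - a)"
  by (rule metric_ba_add) (simp add: diff_eq inf_commute inf_left_commute)

lemma metric_ba_mono: "a \<le> b \<Longrightarrow> \<mu> a \<le> \<mu> b"
  using metric_ba_sup_diff[of a b] metric_ba_nonneg[of "b - a"]
  by (simp add: diff_eq sup_inf_distrib1 sup_absorb2)

lemma metric_ba_le_1: "\<mu> a \<le> 1"
  using metric_ba_mono[of a top] metric_ba_top by simp

lemma metric_ba_sup_le: "\<mu> (sup a b) \<le> \<mu> a + \<mu> b"
  using metric_ba_sup_diff[of a b] metric_ba_mono[of "b - a" b]
  by (simp add: diff_eq sup_inf_distrib1)

end

definition stone_inner_measure :: "('b::boolean_algebra \<Rightarrow> real) \<Rightarrow> 'b set set \<Rightarrow> ennreal" where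
  "stone_inner_measure \<mu> U = (SUP a\<in>{a. cl a \<subseteq> U}. ennreal (\<mu> a))"

definition stone_outer_measure :: "('b::boolean_algebra \<Rightarrow> real) \<Rightarrow> 'b set set \<Rightarrow> ennreal" where
  "stone_outer_measure \<mu> E = (INF U\<in>{U. openin stone_top U \<and> E \<subseteq> U}. stone_inner_measure \<mu> U)"

context
  fixes \<mu> :: "'b::boolean_algebra \<Rightarrow> real"
  assumes \<mu>: "metric_ba \<mu>"
begin

lemma stone_inner_measure_upper: "cl a \<subseteq> U \<Longrightarrow> ennreal (\<mu> a) \<le> stone_inner_measure \<mu> U"
  unfolding stone_inner_measure_def by (rule SUP_upper) simp

lemma stone_inner_measure_mono: "U \<subseteq> V \<Longrightarrow> stone_inner_measure \<mu> U \<le> stone_inner_measure \<mu> V"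
  unfolding stone_inner_measure_def by (rule SUP_subset_mono) auto

lemma stone_inner_measure_le_1: "stone_inner_measure \<mu> U \<le> 1"
  unfolding stone_inner_measure_def by (rule SUP_least) (simp add: metric_ba_le_1[OF \<mu>])

lemma stone_inner_measure_clopen: "stone_inner_measure \<mu> (cl a) = ennreal (\<mu> a)"
proof (rule antisym)
  show "stone_inner_measure \<mu> (cl a) \<le> ennreal (\<mu> a)"
    unfolding stone_inner_measure_def
    by (rule SUP_least) (auto simp: stone_clopen_subset_iff intro!: ennreal_leI metric_ba_mono[OF \<mu>])
qed (rule stone_inner_measure_upper, simp)

lemma stone_inner_measure_empty: "stone_inner_measure \<mu> {} = 0"
  using stone_inner_measure_clopen[of bot] metric_ba_add[OF \<mu>, of bot bot] by simp

lemma stone_inner_measure_Un: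
  assumes U: "openin stone_top U" and V: "openin stone_top V"
  shows "stone_inner_measure \<mu> (U \<union> V) \<le> stone_inner_measure \<mu> U + stone_inner_measure \<mu> V"
  unfolding stone_inner_measure_def[of _ "U \<union> V"]
proof (rule SUP_least)
  fix c assume "c \<in> {a. cl a \<subseteq> U \<union> V}"
  then have "cl c \<subseteq> U \<union> V" by simp
  then obtain a where a: "cl a \<subseteq> U" "cl (c - a) \<subseteq> V"
    by (rule stone_clopen_subset_Un_open[OF U V])
  have "c \<le> sup a (c - a)" by (simp add: diff_eq sup_inf_distrib1)
  then have "\<mu> c \<le> \<mu> a + \<mu> (c - a)"
    using metric_ba_mono[OF \<mu>] metric_ba_sup_le[OF \<mu>, of a "c - a"] by (meson order_trans)
  then have "ennreal (\<mu> c) \<le> ennreal (\<mu> a) + ennreal (\<mu> (c - a))"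
    using metric_ba_nonneg[OF \<mu>] by (simp add: ennreal_plus[symmetric] del: ennreal_plus)
  also have "\<dots> \<le> stone_inner_measure \<mu> U + stone_inner_measure \<mu> V"
    using a by (intro add_mono stone_inner_measure_upper)
  finally show "ennreal (\<mu> c) \<le> stone_inner_measure \<mu> U + stone_inner_measure \<mu> V" .
qed

lemma stone_inner_measure_UN_lessThan:
  fixes n :: nat
  assumes "\<And>i. openin stone_top (U i)"
  shows "stone_inner_measure \<mu> (\<Union>i<n. U i) \<le> (\<Sum>i<n. stone_inner_measure \<mu> (U i))"
proof (induction n)
  case 0 then show ?case by (simp add: stone_inner_measure_empty)
next
  case (Suc n)
  have "stone_inner_measure \<mu> (\<Union>i<Suc n. U i) = stone_inner_measure \<mu> ((\<Union>i<n. U i) \<union> U n)"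
    by (simp add: lessThan_Suc Un_commute)
  also have "\<dots> \<le> stone_inner_measure \<mu> (\<Union>i<n. U i) + stone_inner_measure \<mu> (U n)"
    using assms by (intro stone_inner_measure_Un) auto
  also have "\<dots> \<le> (\<Sum>i<Suc n. stone_inner_measure \<mu> (U i))"
    using Suc by (simp add: add_right_mono)
  finally show ?case .
qed

lemma stone_inner_measure_countably_subadditive:
  assumes U: "\<And>i. openin stone_top (U i)"
  shows "stone_inner_measure \<mu> (\<Union>i. U i) \<le> (\<Sum>i. stone_inner_measure \<mu> (U i))"
  unfolding stone_inner_measure_def[of _ "\<Union>i. U i"]
proof (rule SUP_least)
  fix c assume c: "c \<in> {a. cl a \<subseteq> (\<Union>i. U i)}"
  then have "cl c \<subseteq> (\<Union>i. U i)" by simp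
  then obtain n where "cl c \<subseteq> (\<Union>i<n. U i)"
    by (rule compactin_subset_UN_lessThan[OF compactin_stone_clopen U])
  then have "ennreal (\<mu> c) \<le> stone_inner_measure \<mu> (\<Union>i<n. U i)"
    by (rule stone_inner_measure_upper)
  also have "\<dots> \<le> (\<Sum>i<n. stone_inner_measure \<mu> (U i))"
    by (rule stone_inner_measure_UN_lessThan[OF U])
  also have "\<dots> \<le> (\<Sum>i. stone_inner_measure \<mu> (U i))"
    by (rule sum_le_suminf) auto
  finally show "ennreal (\<mu> c) \<le> (\<Sum>i. stone_inner_measure \<mu> (U i))" .
qed

lemma stone_inner_measure_add_clopen:
  assumes "cl a \<subseteq> V"
  shows "ennreal (\<mu> a) + stone_inner_measure \<mu> (V - cl a) \<le> stone_inner_measure \<mu> V"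
proof -
  have "ennreal (\<mu> a) + stone_inner_measure \<mu> (V - cl a) =
      (SUP b\<in>{b. cl b \<subseteq> V - cl a}. ennreal (\<mu> a) + ennreal (\<mu> b))"
    unfolding stone_inner_measure_def by (rule ennreal_SUP_add_right) (auto intro!: exI[of _ bot])
  also have "\<dots> \<le> stone_inner_measure \<mu> V"
  proof (rule SUP_least)
    fix b assume "b \<in> {b. cl b \<subseteq> V - cl a}"
    then have b: "cl b \<subseteq> V - cl a" by simp
    then have "cl (inf a b) = cl bot" by (auto simp: stone_clopen_inf)
    then have "inf a b = bot" by (simp only: stone_clopen_eq_iff)
    then have "\<mu> (sup a b) = \<mu> a + \<mu> b" by (rule metric_ba_add[OF \<mu>])
    moreover have "cl (sup a b) \<subseteq> V" using b assms by (auto simp: stone_clopen_sup)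
    ultimately show "ennreal (\<mu> a) + ennreal (\<mu> b) \<le> stone_inner_measure \<mu> V"
      using stone_inner_measure_upper[of "sup a b" V] metric_ba_nonneg[OF \<mu>]
      by (simp add: ennreal_plus[symmetric] del: ennreal_plus)
  qed
  finally show ?thesis .
qed

lemma stone_outer_measure_le: "openin stone_top U \<Longrightarrow> E \<subseteq> U \<Longrightarrow> stone_outer_measure \<mu> E \<le> stone_inner_measure \<mu> U"
  unfolding stone_outer_measure_def by (rule INF_lower) simp

lemma stone_outer_measure_open: "openin stone_top U \<Longrightarrow> stone_outer_measure \<mu> U = stone_inner_measure \<mu> U"
  unfolding stone_outer_measure_def
  by (rule antisym) (auto intro!: INF_lower INF_greatest stone_inner_measure_mono)

lemma stone_outer_measure_mono: "E \<subseteq> F \<Longrightarrow> stone_outer_measure \<mu> E \<le> stone_outer_measure \<mu> F"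
  unfolding stone_outer_measure_def by (rule INF_superset_mono) auto

lemma stone_outer_measure_less_top: "E \<subseteq> stone_space \<Longrightarrow> stone_outer_measure \<mu> E < top"
proof -
  assume "E \<subseteq> stone_space"
  then have "stone_outer_measure \<mu> E \<le> stone_inner_measure \<mu> stone_space"
    by (intro stone_outer_measure_le) (use openin_topspace[of "stone_top :: 'b set topology"] in simp_all)
  also have "\<dots> \<le> 1" by (rule stone_inner_measure_le_1)
  finally show ?thesis by (simp add: le_less_trans)
qed

lemma stone_outer_measure_approx:
  assumes "E \<subseteq> stone_space" "0 < e"
  obtains U where "openin stone_top U" "E \<subseteq> U" "stone_inner_measure \<mu> U < stone_outer_measure \<mu> E + ennreal e"
proof -
  have "stone_outer_measure \<mu> E < stone_outer_measure \<mu> E + ennreal e"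
    using stone_outer_measure_less_top[OF assms(1)] assms(2)
    by (cases "stone_outer_measure \<mu> E")
      (auto simp: ennreal_plus[symmetric] ennreal_less_iff simp del: ennreal_plus)
  then obtain U where "U \<in> {U. openin stone_top U \<and> E \<subseteq> U}"
    "stone_inner_measure \<mu> U < stone_outer_measure \<mu> E + ennreal e"
    unfolding stone_outer_measure_def[of _ E] INF_less_iff ..
  then show thesis using that by blast
qed

lemma stone_outer_measure_countably_subadditive:
  assumes A: "\<And>i. A i \<subseteq> stone_space"
  shows "stone_outer_measure \<mu> (\<Union>i. A i) \<le> (\<Sum>i. stone_outer_measure \<mu> (A i))"
proof (rule ennreal_le_epsilon)
  fix e :: real assume e: "0 < e"
  define d where "d i = e * (1/2)^Suc i" for i
  have d: "0 < d i" for i using e by (simp add: d_def)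
  have "\<exists>U. openin stone_top U \<and> A i \<subseteq> U \<and> stone_inner_measure \<mu> U < stone_outer_measure \<mu> (A i) + ennreal (d i)" for i
    by (rule stone_outer_measure_approx[OF A d]) blast
  then obtain U where U: "\<And>i. openin stone_top (U i)" "\<And>i. A i \<subseteq> U i"
    "\<And>i. stone_inner_measure \<mu> (U i) < stone_outer_measure \<mu> (A i) + ennreal (d i)"
    by metis
  have d_sums: "d sums e" unfolding d_def using sums_mult[OF power_half_series, of e] by simp
  have "stone_outer_measure \<mu> (\<Union>i. A i) \<le> stone_inner_measure \<mu> (\<Union>i. U i)"
    using U(1,2) by (intro stone_outer_measure_le) (auto intro: openin_Union)
  also have "\<dots> \<le> (\<Sum>i. stone_inner_measure \<mu> (U i))"
    by (rule stone_inner_measure_countably_subadditive[OF U(1)])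
  also have "\<dots> \<le> (\<Sum>i. stone_outer_measure \<mu> (A i) + ennreal (d i))"
    using U(3) by (intro suminf_le) (auto intro: less_imp_le)
  also have "\<dots> = (\<Sum>i. stone_outer_measure \<mu> (A i)) + (\<Sum>i. ennreal (d i))"
    by (rule suminf_add[symmetric]) auto
  also have "(\<Sum>i. ennreal (d i)) = ennreal e"
    using suminf_ennreal2[of d, OF less_imp_le[OF d] sums_summable[OF d_sums]] sums_unique[OF d_sums]
    by simp
  finally show "stone_outer_measure \<mu> (\<Union>i. A i) \<le> (\<Sum>i. stone_outer_measure \<mu> (A i)) + ennreal e" .
qed

lemma outer_measure_space_stone_outer_measure:
  "outer_measure_space (Pow stone_space) (stone_outer_measure \<mu>)"
proof -
  have "stone_outer_measure \<mu> {} = 0"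
    using stone_outer_measure_open[of "{}"] stone_inner_measure_empty by simp
  then show ?thesis
    unfolding outer_measure_space_def positive_def increasing_def countably_subadditive_def
    by (auto intro: stone_outer_measure_mono stone_outer_measure_countably_subadditive)
qed

lemma stone_outer_measure_split_le:
  assumes U: "openin stone_top U" and V: "openin stone_top V" "X \<subseteq> V"
  shows "stone_outer_measure \<mu> (X \<inter> U) + stone_outer_measure \<mu> (X - U) \<le> stone_inner_measure \<mu> V"
proof -
  have "stone_outer_measure \<mu> (X \<inter> U) \<le> stone_inner_measure \<mu> (U \<inter> V)"
    using V(2) by (intro stone_outer_measure_le openin_Int U V(1)) auto
  then have "stone_outer_measure \<mu> (X \<inter> U) + stone_outer_measure \<mu> (X - U) \<le>
      stone_inner_measure \<mu> (U \<inter> V) + stone_outer_measure \<mu> (X - U)"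
    by (rule add_right_mono)
  also have "\<dots> = (SUP a\<in>{a. cl a \<subseteq> U \<inter> V}. ennreal (\<mu> a) + stone_outer_measure \<mu> (X - U))"
    unfolding stone_inner_measure_def by (rule ennreal_SUP_add_left[symmetric]) (auto intro!: exI[of _ bot])
  also have "\<dots> \<le> stone_inner_measure \<mu> V"
  proof (rule SUP_least)
    fix a assume "a \<in> {a. cl a \<subseteq> U \<inter> V}"
    then have a: "cl a \<subseteq> U \<inter> V" by simp
    have "V - cl a = V \<inter> cl (- a)" using openin_subset[OF V(1)] by (auto simp: stone_clopen_compl)
    then have "openin stone_top (V - cl a)" using openin_Int[OF V(1) openin_stone_clopen] by simp
    then have "stone_outer_measure \<mu> (X - U) \<le> stone_inner_measure \<mu> (V - cl a)"
      by (rule stone_outer_measure_le) (use a V in auto)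
    then have "ennreal (\<mu> a) + stone_outer_measure \<mu> (X - U) \<le> ennreal (\<mu> a) + stone_inner_measure \<mu> (V - cl a)"
      by (rule add_left_mono)
    also have "\<dots> \<le> stone_inner_measure \<mu> V" using a by (intro stone_inner_measure_add_clopen) auto
    finally show "ennreal (\<mu> a) + stone_outer_measure \<mu> (X - U) \<le> stone_inner_measure \<mu> V" .
  qed
  finally show ?thesis .
qed

lemma openin_lambda_system:
  assumes U: "openin stone_top U"
  shows "U \<in> lambda_system stone_space (Pow stone_space) (stone_outer_measure \<mu>)"
  unfolding algebra.lambda_system_eq[OF algebra_Pow]
proof (intro CollectI conjI ballI)
  show "U \<in> Pow stone_space" using openin_subset[OF U] by simp
  fix X :: "'b set set" assume "X \<in> Pow stone_space"
  then have X: "X \<subseteq> stone_space" by simp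
  have "stone_outer_measure \<mu> (X \<inter> U) + stone_outer_measure \<mu> (X - U) \<le> stone_outer_measure \<mu> X"
    unfolding stone_outer_measure_def[of _ X]
    by (intro INF_greatest stone_outer_measure_split_le[OF U]) auto
  moreover have "stone_outer_measure \<mu> X \<le> stone_outer_measure \<mu> (X \<inter> U) + stone_outer_measure \<mu> (X - U)"
  proof -
    have "subadditive (Pow stone_space) (stone_outer_measure \<mu>)"
      using outer_measure_space_stone_outer_measure
      by (intro ring_of_sets.countably_subadditive_subadditive[OF ring_of_sets_Pow])
        (simp_all add: outer_measure_space_def)
    then have "stone_outer_measure \<mu> ((X \<inter> U) \<union> (X - U)) \<le>
        stone_outer_measure \<mu> (X \<inter> U) + stone_outer_measure \<mu> (X - U)"
      by (rule subadditiveD) (use X in auto)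
    moreover have "(X \<inter> U) \<union> (X - U) = X" by blast
    ultimately show ?thesis by simp
  qed
  ultimately show "stone_outer_measure \<mu> (X \<inter> U) + stone_outer_measure \<mu> (X - U) = stone_outer_measure \<mu> X"
    by (rule antisym)
qed

lemma measure_space_stone_outer_measure:
  "measure_space stone_space (borel_sets_of stone_top) (stone_outer_measure \<mu>)"
proof -
  let ?L = "lambda_system stone_space (Pow stone_space) (stone_outer_measure \<mu>)"
  have L: "measure_space stone_space ?L (stone_outer_measure \<mu>)"
    by (rule sigma_algebra.caratheodory_lemma[OF sigma_algebra_Pow outer_measure_space_stone_outer_measure])
  then have "sigma_algebra stone_space ?L" by (simp add: measure_space_def)
  then have "borel_sets_of stone_top \<subseteq> ?L"
    unfolding borel_sets_of_def topspace_stone_top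
    by (rule sigma_algebra.sigma_sets_subset) (auto intro: openin_lambda_system)
  then show ?thesis by (rule measure_down[OF L sigma_algebra_stone_borel])
qed

end

definition stone_radon :: "('b::boolean_algebra \<Rightarrow> real) \<Rightarrow> 'b set measure" where
  "stone_radon \<mu> = measure_of stone_space (borel_sets_of stone_top) (stone_outer_measure \<mu>)"

lemma sets_stone_radon: "sets (stone_radon \<mu>) = borel_sets_of stone_top"
  unfolding stone_radon_def by (rule sigma_algebra.sets_measure_of_eq[OF sigma_algebra_stone_borel])

lemma space_stone_radon: "space (stone_radon \<mu>) = stone_space"
  unfolding stone_radon_def
  by (rule space_measure_of) (use sets.space_closed[of stone_borel] in \<open>simp add: sets_stone_borel space_stone_borel\<close>)

context
  fixes \<mu> :: "'b::boolean_algebra \<Rightarrow> real"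
  assumes \<mu>: "metric_ba \<mu>"
begin

lemma emeasure_stone_radon:
  "E \<in> borel_sets_of stone_top \<Longrightarrow> emeasure (stone_radon \<mu>) E = stone_outer_measure \<mu> E"
  using measure_space_stone_outer_measure[OF \<mu>] unfolding stone_radon_def measure_space_def
  by (intro emeasure_measure_of_sigma[OF sigma_algebra_stone_borel]) auto

lemma finite_measure_stone_radon: "finite_measure (stone_radon \<mu>)"
proof
  have "stone_space \<in> borel_sets_of (stone_top :: 'b set topology)"
    using openin_stone_borel[OF openin_topspace[of stone_top]] by simp
  then have "emeasure (stone_radon \<mu>) (space (stone_radon \<mu>)) = stone_outer_measure \<mu> stone_space"
    by (simp add: emeasure_stone_radon space_stone_radon)
  also have "\<dots> < \<infinity>" using stone_outer_measure_less_top[OF \<mu> order_refl] by simp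
  finally show "emeasure (stone_radon \<mu>) (space (stone_radon \<mu>)) \<noteq> \<infinity>" by simp
qed

lemma measure_stone_radon_clopen: "measure (stone_radon \<mu>) (cl b) = \<mu> b"
  using emeasure_stone_radon[OF openin_stone_borel[OF openin_stone_clopen]]
    stone_outer_measure_open[OF \<mu> openin_stone_clopen] stone_inner_measure_clopen[OF \<mu>]
    metric_ba_nonneg[OF \<mu>]
  by (simp add: measure_def)

text \<open>A Borel set E is approximated from inside by the compact complement of an open set
  approximating the complement of E from outside.\<close>

lemma stone_radon_compact_approx:
  assumes E: "E \<in> borel_sets_of stone_top" and e: "0 < e"
  obtains K where "compactin stone_top K" "K \<subseteq> E"
    "measure (stone_radon \<mu>) E \<le> measure (stone_radon \<mu>) K + e"
proof -
  let ?M = "stone_radon \<mu>"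
  interpret finite_measure ?M by (rule finite_measure_stone_radon)
  have sets: "sets ?M = borel_sets_of stone_top" and space: "space ?M = stone_space"
    by (simp_all add: sets_stone_radon space_stone_radon)
  have E_space: "E \<subseteq> stone_space" using E sets sets.sets_into_space space by blast
  have C: "stone_space - E \<in> sets ?M" using E sets space by (metis sets.compl_sets)
  obtain V where V: "openin stone_top V" "stone_space - E \<subseteq> V"
    "stone_inner_measure \<mu> V < stone_outer_measure \<mu> (stone_space - E) + ennreal e"
    by (rule stone_outer_measure_approx[OF \<mu> Diff_subset e])
  have V_sets: "V \<in> sets ?M" using openin_stone_borel[OF V(1)] sets by simp
  have "emeasure ?M V \<le> emeasure ?M (stone_space - E) + ennreal e"
    using V(3) stone_outer_measure_open[OF \<mu> V(1)] emeasure_stone_radon[OF openin_stone_borel[OF V(1)]]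
      emeasure_stone_radon[of "stone_space - E"] C sets by simp
  then have "measure ?M V \<le> measure ?M (stone_space - E) + e"
    using e by (simp add: emeasure_eq_measure ennreal_plus[symmetric] del: ennreal_plus)
  moreover have "measure ?M (stone_space - V) = measure ?M stone_space - measure ?M V"
    using finite_measure_compl[OF V_sets] space by simp
  moreover have "measure ?M E = measure ?M stone_space - measure ?M (stone_space - E)"
    using finite_measure_compl[OF C] space E_space by (simp add: Diff_Diff_Int Int_absorb1)
  ultimately have "measure ?M E \<le> measure ?M (stone_space - V) + e" by linarith
  moreover have "compactin stone_top (stone_space - V)"
    using closedin_compact_space[OF compact_space_stone_top closedin_diff[OF closedin_topspace V(1)]]
    by simp
  moreover have "stone_space - V \<subseteq> E" using V(2) by blast
  ultimately show thesis using that by blast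
qed

lemma stone_radon_inner_regular:
  assumes E: "E \<in> borel_sets_of stone_top"
  shows "measure (stone_radon \<mu>) E =
    (SUP K\<in>{K. compactin stone_top K \<and> K \<subseteq> E}. measure (stone_radon \<mu>) K)"
proof -
  let ?M = "stone_radon \<mu>" and ?K = "{K. compactin stone_top K \<and> K \<subseteq> E}"
  interpret finite_measure ?M by (rule finite_measure_stone_radon)
  have E_sets: "E \<in> sets ?M" using E by (simp add: sets_stone_radon)
  have bdd: "bdd_above (measure ?M ` ?K)"
    by (rule bdd_aboveI[of _ "measure ?M E"]) (auto intro!: finite_measure_mono E_sets)
  have "(SUP K\<in>?K. measure ?M K) \<le> measure ?M E"
    by (rule cSUP_least) (auto intro!: finite_measure_mono E_sets)
  moreover have "measure ?M E \<le> (SUP K\<in>?K. measure ?M K) + e" if e: "0 < e" for e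
  proof -
    obtain K where K: "compactin stone_top K" "K \<subseteq> E" "measure ?M E \<le> measure ?M K + e"
      by (rule stone_radon_compact_approx[OF E e])
    have "measure ?M K \<le> (SUP K\<in>?K. measure ?M K)" using K(1,2) by (intro cSUP_upper[OF _ bdd]) simp
    with K(3) show ?thesis by linarith
  qed
  then have "measure ?M E \<le> (SUP K\<in>?K. measure ?M K)" by (rule field_le_epsilon)
  ultimately show ?thesis by (rule antisym[rotated])
qed

lemma radon_on_stone_radon: "radon_on stone_top (stone_radon \<mu>)"
  unfolding radon_on_def
  using finite_measure.emeasure_finite[OF finite_measure_stone_radon] stone_radon_inner_regular
  by (simp add: sets_stone_radon space_stone_radon less_top)

end

section \<open>Uniqueness of Radon extensions\<close>

lemma radon_on_finite_measure:
  assumes "radon_on X M"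
  shows "finite_measure M"
proof
  have "emeasure M (space M) < \<infinity>" using assms unfolding radon_on_def by blast
  then show "emeasure M (space M) \<noteq> \<infinity>" by simp
qed

lemma measure_stone_preimage_open:
  fixes M :: "'b::boolean_algebra set measure" and \<psi> :: "'a::boolean_algebra \<Rightarrow> 'b"
  assumes \<mu>: "metric_ba \<mu>" and M: "radon_on stone_top M" "\<And>b. measure M (cl b) = \<mu> b"
    and \<psi>: "bool_hom \<psi>" and U: "openin stone_top U"
  shows "measure M (stone_preimage \<psi> U) = (SUP a\<in>{a. cl a \<subseteq> U}. \<mu> (\<psi> a))"
proof -
  interpret finite_measure M by (rule radon_on_finite_measure[OF M(1)])
  let ?P = "stone_preimage \<psi> U" and ?A = "{a. cl a \<subseteq> U}"
  let ?K = "{K. compactin stone_top K \<and> K \<subseteq> ?P}"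
  have sets: "sets M = borel_sets_of stone_top" using M(1) by (simp add: radon_on_def)
  have P: "?P \<in> sets M" using openin_stone_borel[OF openin_stone_preimage[OF \<psi> U]] sets by simp
  have bot: "bot \<in> ?A" by simp
  have bdd: "bdd_above ((\<lambda>a. \<mu> (\<psi> a)) ` ?A)"
    by (rule bdd_aboveI[of _ 1]) (auto intro: metric_ba_le_1[OF \<mu>])
  have clopen_le: "\<mu> (\<psi> a) \<le> measure M ?P" if "a \<in> ?A" for a
  proof -
    have "stone_preimage \<psi> (cl a) \<subseteq> ?P" using that by (auto simp: stone_preimage_def)
    then have "measure M (stone_preimage \<psi> (cl a)) \<le> measure M ?P" by (rule finite_measure_mono[OF _ P])
    then show ?thesis by (simp add: stone_preimage_clopen[OF \<psi>] M(2))
  qed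
  have compact_le: "\<exists>a\<in>?A. measure M K \<le> \<mu> (\<psi> a)" if "K \<in> ?K" for K
  proof -
    from that obtain a where a: "cl a \<subseteq> U" "K \<subseteq> cl (\<psi> a)"
      using compactin_subset_stone_preimage_open[OF \<psi> U] by blast
    have "measure M K \<le> measure M (cl (\<psi> a))"
      using a(2) openin_stone_borel[OF openin_stone_clopen] sets by (intro finite_measure_mono) auto
    with a(1) M(2) show ?thesis by auto
  qed
  have "measure M ?P = (SUP K\<in>?K. measure M K)" using M(1) P unfolding radon_on_def by blast
  also have "\<dots> \<le> (SUP a\<in>?A. \<mu> (\<psi> a))"
    using compact_le by (intro cSUP_mono[OF _ bdd]) auto
  finally have "measure M ?P \<le> (SUP a\<in>?A. \<mu> (\<psi> a))" .
  moreover have "(SUP a\<in>?A. \<mu> (\<psi> a)) \<le> measure M ?P"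
    using bot clopen_le by (intro cSUP_least) blast+
  ultimately show ?thesis by (rule antisym)
qed

lemma stone_map_id: "x \<in> stone_space \<Longrightarrow> stone_map id x = x"
  by (simp add: stone_map_def)

lemma bool_hom_id: "bool_hom id"
  by (simp add: bool_hom_def)

lemma radon_on_stone_unique:
  fixes M N :: "'b::boolean_algebra set measure"
  assumes \<mu>: "metric_ba \<mu>"
    and M: "radon_on stone_top M" "\<And>b. measure M (cl b) = \<mu> b"
    and N: "radon_on stone_top N" "\<And>b. measure N (cl b) = \<mu> b"
  shows "M = N"
proof (rule measure_eqI_generator_eq[where E = "{U. openin stone_top U}" and \<Omega> = stone_space
      and A = "\<lambda>_. stone_space"])
  fix U :: "'b set set" assume "U \<in> {U. openin stone_top U}"
  then have U: "openin stone_top U" by simp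
  have "stone_preimage id U = U"
    using openin_subset[OF U] by (auto simp: stone_preimage_def stone_map_id)
  then have "measure M U = measure N U"
    using measure_stone_preimage_open[OF \<mu> M bool_hom_id U] measure_stone_preimage_open[OF \<mu> N bool_hom_id U]
    by simp
  then show "emeasure M U = emeasure N U"
    using radon_on_finite_measure[OF M(1)] radon_on_finite_measure[OF N(1)]
    by (simp add: finite_measure.emeasure_eq_measure)
next
  show "sets M = sigma_sets stone_space {U. openin stone_top U}"
    "sets N = sigma_sets stone_space {U. openin stone_top U}"
    using M(1) N(1) by (simp_all add: radon_on_def borel_sets_of_def)
  show "emeasure M stone_space \<noteq> \<infinity>" for i :: nat
    using M(1) by (auto simp: radon_on_def)
qed (use openin_topspace[of stone_top] in \<open>auto simp: Int_stable_def openin_stone_top_subset_Pow intro: openin_Int\<close>)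

lemma radon_ext_stone:
  assumes \<mu>: "metric_ba \<mu>"
  shows "radon_on stone_top (radon_ext \<mu>)" "\<And>b. measure (radon_ext \<mu>) (cl b) = \<mu> b"
proof -
  have "radon_on stone_top (radon_ext \<mu>) \<and> (\<forall>b. measure (radon_ext \<mu>) (cl b) = \<mu> b)"
    unfolding radon_ext_def
  proof (rule theI)
    show "radon_on stone_top (stone_radon \<mu>) \<and> (\<forall>b. measure (stone_radon \<mu>) (cl b) = \<mu> b)"
      using radon_on_stone_radon[OF \<mu>] measure_stone_radon_clopen[OF \<mu>] by blast
  qed (use radon_on_stone_unique[OF \<mu> _ _ radon_on_stone_radon[OF \<mu>] measure_stone_radon_clopen[OF \<mu>]] in blast)
  then show "radon_on stone_top (radon_ext \<mu>)" "\<And>b. measure (radon_ext \<mu>) (cl b) = \<mu> b"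
    by blast+
qed

section \<open>Convergence of preimages in measure\<close>

definition preimage_distance :: "'a measure \<Rightarrow> ('a \<Rightarrow> 'b) \<Rightarrow> ('a \<Rightarrow> 'b) \<Rightarrow> 'b set \<Rightarrow> real" where
  "preimage_distance M f g E = measure M (sym_diff (f -` E \<inter> space M) (g -` E \<inter> space M))"

lemma preimage_distance_nonneg: "0 \<le> preimage_distance M f g E"
  by (simp add: preimage_distance_def)

lemma tendsto_measure_vimage_decseq:
  assumes M: "finite_measure M" and g: "g \<in> M \<rightarrow>\<^sub>M N"
    and T: "range T \<subseteq> sets N" "decseq T" "(\<Inter>k. T k) = {}"
  shows "(\<lambda>k. measure M (g -` T k \<inter> space M)) \<longlonglongrightarrow> 0"
proof -
  interpret finite_measure M by (rule M)
  have "(\<lambda>k. measure M (g -` T k \<inter> space M)) \<longlonglongrightarrow> measure M (\<Inter>k. g -` T k \<inter> space M)"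
  proof (rule Lim_measure_decseq)
    show "range (\<lambda>k. g -` T k \<inter> space M) \<subseteq> sets M" using measurable_sets[OF g] T(1) by auto
    show "decseq (\<lambda>k. g -` T k \<inter> space M)" using T(2) unfolding decseq_def by blast
  qed (simp add: emeasure_eq_measure)
  moreover have "(\<Inter>k. g -` T k \<inter> space M) = {}" using T(3) by auto
  ultimately show ?thesis by simp
qed

context
  fixes M :: "'a measure" and N :: "'b measure" and f g :: "'a \<Rightarrow> 'b"
  assumes M: "finite_measure M" and f: "f \<in> M \<rightarrow>\<^sub>M N" and g: "g \<in> M \<rightarrow>\<^sub>M N"
begin

lemma preimage_distance_le_sym_diff:
  assumes E: "E \<in> sets N" and E': "E' \<in> sets N"
  shows "preimage_distance M f g E \<le> preimage_distance M f g E' +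
    measure M (f -` sym_diff E E' \<inter> space M) + measure M (g -` sym_diff E E' \<inter> space M)"
proof -
  interpret finite_measure M by (rule M)
  have sets: "f -` X \<inter> space M \<in> sets M" "g -` X \<inter> space M \<in> sets M" if "X \<in> sets N" for X
    using measurable_sets[OF f that] measurable_sets[OF g that] .
  let ?D = "\<lambda>X. sym_diff (f -` X \<inter> space M) (g -` X \<inter> space M)"
  let ?F = "f -` sym_diff E E' \<inter> space M" and ?G = "g -` sym_diff E E' \<inter> space M"
  have D: "?D E' \<in> sets M" using sets[OF E'] by auto
  have "sym_diff E E' \<in> sets N" using E E' by auto
  then have FG: "?F \<in> sets M" "?G \<in> sets M" by (rule sets(1), rule sets(2))
  have "?D E \<subseteq> (?D E' \<union> ?F) \<union> ?G" by blast
  then have "measure M (?D E) \<le> measure M ((?D E' \<union> ?F) \<union> ?G)"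
    using D FG by (intro finite_measure_mono) auto
  also have "\<dots> \<le> measure M (?D E' \<union> ?F) + measure M ?G"
    using D FG by (intro measure_Un_le) auto
  also have "\<dots> \<le> measure M (?D E') + measure M ?F + measure M ?G"
    using measure_Un_le[OF D FG(1)] by simp
  finally show ?thesis by (simp add: preimage_distance_def)
qed

lemma preimage_distance_UN_le:
  fixes A :: "nat \<Rightarrow> 'b set"
  assumes A: "range A \<subseteq> sets N"
  shows "preimage_distance M f g (\<Union>i<n. A i) \<le> (\<Sum>i<n. preimage_distance M f g (A i))"
proof -
  interpret finite_measure M by (rule M)
  let ?D = "\<lambda>X. sym_diff (f -` X \<inter> space M) (g -` X \<inter> space M)"
  have sets: "?D (A i) \<in> sets M" for i
    using measurable_sets[OF f, of "A i"] measurable_sets[OF g, of "A i"] A by auto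
  have "?D (\<Union>i<n. A i) \<subseteq> (\<Union>i<n. ?D (A i))" by blast
  then have "measure M (?D (\<Union>i<n. A i)) \<le> measure M (\<Union>i<n. ?D (A i))"
    using sets by (intro finite_measure_mono) auto
  also have "\<dots> \<le> (\<Sum>i<n. measure M (?D (A i)))"
    using sets by (intro measure_UNION_le) auto
  finally show ?thesis by (simp add: preimage_distance_def)
qed

lemma preimage_distance_Union_le:
  fixes A :: "nat \<Rightarrow> 'b set"
  assumes A: "range A \<subseteq> sets N"
  shows "preimage_distance M f g (\<Union>i. A i) \<le> (\<Sum>i<k. preimage_distance M f g (A i)) +
    measure M (f -` ((\<Union>i. A i) - (\<Union>i<k. A i)) \<inter> space M) +
    measure M (g -` ((\<Union>i. A i) - (\<Union>i<k. A i)) \<inter> space M)"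
proof -
  have "(\<Union>i. A i) \<in> sets N" "(\<Union>i<k. A i) \<in> sets N" using A by auto
  moreover have "sym_diff (\<Union>i. A i) (\<Union>i<k. A i) = (\<Union>i. A i) - (\<Union>i<k. A i)" by blast
  ultimately have "preimage_distance M f g (\<Union>i. A i) \<le> preimage_distance M f g (\<Union>i<k. A i) +
      measure M (f -` ((\<Union>i. A i) - (\<Union>i<k. A i)) \<inter> space M) +
      measure M (g -` ((\<Union>i. A i) - (\<Union>i<k. A i)) \<inter> space M)"
    using preimage_distance_le_sym_diff by metis
  moreover have "preimage_distance M f g (\<Union>i<k. A i) \<le> (\<Sum>i<k. preimage_distance M f g (A i))"
    by (rule preimage_distance_UN_le[OF A])
  ultimately show ?thesis by linarith
qed

end

text \<open>The hypothesis named uniform below is uniform countable additivity of the image measures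
  of M under the maps f n.\<close>

lemma tendsto_preimage_distance_Union:
  fixes f :: "nat \<Rightarrow> 'a \<Rightarrow> 'b" and A :: "nat \<Rightarrow> 'b set"
  assumes M: "finite_measure M" and f: "\<And>n. f n \<in> M \<rightarrow>\<^sub>M N" and g: "g \<in> M \<rightarrow>\<^sub>M N"
    and A: "range A \<subseteq> sets N"
    and conv: "\<And>i. (\<lambda>n. preimage_distance M (f n) g (A i)) \<longlonglongrightarrow> 0"
    and uniform: "\<And>T e. range T \<subseteq> sets N \<Longrightarrow> decseq T \<Longrightarrow> (\<Inter>k. T k) = {} \<Longrightarrow> 0 < e \<Longrightarrow>
      \<exists>K. \<forall>k\<ge>K. \<forall>n. measure M (f n -` T k \<inter> space M) < e"
  shows "(\<lambda>n. preimage_distance M (f n) g (\<Union>i. A i)) \<longlonglongrightarrow> 0"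
proof (rule LIMSEQ_I)
  fix r :: real assume r: "0 < r"
  define T where "T k = (\<Union>i. A i) - (\<Union>i<k. A i)" for k
  have T: "range T \<subseteq> sets N" "decseq T" "(\<Inter>k. T k) = {}"
    using A unfolding T_def decseq_def by (auto intro: lessThan_Suc_eq_insert_0)
  obtain K1 where K1: "\<And>n. measure M (f n -` T K1 \<inter> space M) < r / 3"
    using uniform[OF T, of "r / 3"] r by auto
  from order_tendstoD(2)[OF tendsto_measure_vimage_decseq[OF M g T], of "r / 3"] r
  obtain K2 where K2: "\<And>k. k \<ge> K2 \<Longrightarrow> measure M (g -` T k \<inter> space M) < r / 3"
    by (auto simp: eventually_sequentially)
  define k where "k = max K1 K2"
  have f_tail: "measure M (f n -` T k \<inter> space M) < r / 3" for n
  proof -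
    interpret finite_measure M by (rule M)
    have "T k \<subseteq> T K1" using T(2) unfolding k_def decseq_def by simp
    then have "measure M (f n -` T k \<inter> space M) \<le> measure M (f n -` T K1 \<inter> space M)"
      using measurable_sets[OF f] T(1) by (intro finite_measure_mono) auto
    with K1[of n] show ?thesis by linarith
  qed
  have g_tail: "measure M (g -` T k \<inter> space M) < r / 3" using K2 unfolding k_def by simp
  have "(\<lambda>n. \<Sum>i<k. preimage_distance M (f n) g (A i)) \<longlonglongrightarrow> 0"
    using conv by (intro tendsto_null_sum) auto
  from order_tendstoD(2)[OF this, of "r / 3"] r
  obtain n0 where n0: "\<And>n. n \<ge> n0 \<Longrightarrow> (\<Sum>i<k. preimage_distance M (f n) g (A i)) < r / 3"
    by (auto simp: eventually_sequentially)
  have "preimage_distance M (f n) g (\<Union>i. A i) < r" if "n \<ge> n0" for n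
    using preimage_distance_Union_le[OF M f[of n] g A, of k] n0[OF that] f_tail[of n] g_tail
    unfolding T_def by linarith
  then show "\<exists>n0. \<forall>n\<ge>n0. norm (preimage_distance M (f n) g (\<Union>i. A i) - 0) < r"
    using preimage_distance_nonneg by (metis abs_of_nonneg diff_zero real_norm_def)
qed

lemma tendsto_preimage_distance_sigma_sets:
  fixes f :: "nat \<Rightarrow> 'a \<Rightarrow> 'b"
  assumes M: "finite_measure M" and f: "\<And>n. f n \<in> M \<rightarrow>\<^sub>M N" and g: "g \<in> M \<rightarrow>\<^sub>M N"
    and N: "sets N = sigma_sets (space N) G"
    and conv: "\<And>E. E \<in> G \<Longrightarrow> (\<lambda>n. preimage_distance M (f n) g E) \<longlonglongrightarrow> 0"
    and uniform: "\<And>T e. range T \<subseteq> sets N \<Longrightarrow> decseq T \<Longrightarrow> (\<Inter>k. T k) = {} \<Longrightarrow> 0 < e \<Longrightarrow>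
      \<exists>K. \<forall>k\<ge>K. \<forall>n. measure M (f n -` T k \<inter> space M) < e"
    and E: "E \<in> sets N"
  shows "(\<lambda>n. preimage_distance M (f n) g E) \<longlonglongrightarrow> 0"
  using E unfolding N
proof (induction rule: sigma_sets.induct)
  case (Basic E)
  then show ?case by (rule conv)
next
  case Empty
  then show ?case by (simp add: preimage_distance_def)
next
  case (Compl E)
  have "preimage_distance M (f n) g (space N - E) = preimage_distance M (f n) g E" for n
  proof -
    have "sym_diff (f n -` (space N - E) \<inter> space M) (g -` (space N - E) \<inter> space M) =
        sym_diff (f n -` E \<inter> space M) (g -` E \<inter> space M)"
      using measurable_space[OF f[of n]] measurable_space[OF g] by auto
    then show ?thesis by (simp add: preimage_distance_def)
  qed
  then show ?case using Compl.IH by simp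
next
  case (Union A)
  then have "range A \<subseteq> sets N" by (auto simp: N)
  then show ?case by (rule tendsto_preimage_distance_Union[OF M f g _ Union.IH uniform])
qed

lemma tendsto_preimage_distance_null_sym_diff:
  fixes f :: "nat \<Rightarrow> 'a \<Rightarrow> 'b"
  assumes M: "finite_measure M" and f: "\<And>n. f n \<in> M \<rightarrow>\<^sub>M N" and g: "g \<in> M \<rightarrow>\<^sub>M N"
    and E: "E \<in> sets N" "E' \<in> sets N"
    and null: "\<And>n. f n -` sym_diff E E' \<inter> space M \<in> null_sets M" "g -` sym_diff E E' \<inter> space M \<in> null_sets M"
    and conv: "(\<lambda>n. preimage_distance M (f n) g E') \<longlonglongrightarrow> 0"
  shows "(\<lambda>n. preimage_distance M (f n) g E) \<longlonglongrightarrow> 0"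
proof (rule tendsto_sandwich[OF _ _ tendsto_const conv])
  have "preimage_distance M (f n) g E \<le> preimage_distance M (f n) g E'" for n
    using preimage_distance_le_sym_diff[OF M f g E] null by (simp add: measure_def null_setsD1)
  then show "\<forall>\<^sub>F n in sequentially. preimage_distance M (f n) g E \<le> preimage_distance M (f n) g E'"
    by simp
qed (simp add: preimage_distance_nonneg)

section \<open>Convergence for dual maps of homomorphisms\<close>

context
  fixes \<mu> :: "'b::boolean_algebra \<Rightarrow> real" and M :: "'b set measure"
  assumes \<mu>: "metric_ba \<mu>" and M: "radon_on stone_top M" "\<And>b. measure M (cl b) = \<mu> b"
begin

lemma sets_radon_stone: "sets M = borel_sets_of stone_top"
  and space_radon_stone: "space M = stone_space"
  using M(1) by (simp_all add: radon_on_def)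

lemma measurable_stone_map_radon:
  assumes "bool_hom \<psi>"
  shows "stone_map \<psi> \<in> M \<rightarrow>\<^sub>M stone_borel"
proof -
  have sets: "sets M = sets stone_borel" by (simp add: sets_radon_stone sets_stone_borel)
  show ?thesis
    by (subst measurable_cong_sets[OF sets refl]) (rule measurable_stone_map[OF assms])
qed

lemma vimage_stone_map_radon: "stone_map \<psi> -` E \<inter> space M = stone_preimage \<psi> E"
  by (simp add: space_radon_stone stone_preimage_eq_vimage)

lemma preimage_distance_stone_clopen:
  assumes "bool_hom \<psi>" "bool_hom \<psi>'"
  shows "preimage_distance M (stone_map \<psi>) (stone_map \<psi>') (cl a) = d_mu \<mu> (\<psi> a) (\<psi>' a)"
proof -
  have "sym_diff (cl (\<psi> a)) (cl (\<psi>' a)) = cl (ba_symdiff (\<psi> a) (\<psi>' a))"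
    by (simp add: ba_symdiff_def stone_clopen_sup stone_clopen_diff)
  then show ?thesis
    using assms M(2) by (simp add: preimage_distance_def vimage_stone_map_radon stone_preimage_clopen d_mu_def)
qed

lemma stone_preimage_open_approx:
  fixes \<psi> :: "'a::boolean_algebra \<Rightarrow> 'b"
  assumes \<psi>: "bool_hom \<psi>" and U: "openin stone_top U"
  shows "\<exists>a :: nat \<Rightarrow> 'a. (\<forall>k. cl (a k) \<subseteq> U) \<and>
    stone_preimage \<psi> (U - (\<Union>k. cl (a k))) \<in> null_sets M"
proof -
  interpret finite_measure M by (rule radon_on_finite_measure[OF M(1)])
  let ?A = "{a. cl a \<subseteq> U}" and ?s = "measure M (stone_preimage \<psi> U)"
  have s: "?s = (SUP a\<in>?A. \<mu> (\<psi> a))"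
    by (rule measure_stone_preimage_open[OF \<mu> M \<psi> U])
  have bdd: "bdd_above ((\<lambda>a. \<mu> (\<psi> a)) ` ?A)"
    by (rule bdd_aboveI[of _ 1]) (auto intro: metric_ba_le_1[OF \<mu>])
  have "\<exists>a\<in>?A. ?s - inverse (real (Suc k)) < \<mu> (\<psi> a)" for k
    unfolding s by (subst less_cSUP_iff[symmetric, OF _ bdd]) (auto intro!: exI[of _ bot])
  then obtain a where a: "\<And>k. cl (a k) \<subseteq> U" "\<And>k. ?s - inverse (real (Suc k)) < \<mu> (\<psi> (a k))"
    by (metis mem_Collect_eq)
  let ?V = "\<Union>k. cl (a k)"
  have V: "?V \<in> borel_sets_of stone_top"
    using openin_stone_borel[OF openin_Union[of "range (\<lambda>k. cl (a k))"]] openin_stone_clopen by auto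
  have sets: "stone_preimage \<psi> X \<in> sets M" if "X \<in> borel_sets_of stone_top" for X
    using measurable_sets[OF measurable_stone_map_radon[OF \<psi>], of X] that
    by (simp add: vimage_stone_map_radon sets_stone_borel)
  have "stone_preimage \<psi> ?V \<subseteq> stone_preimage \<psi> U" using a(1) by (auto simp: stone_preimage_def)
  moreover have "stone_preimage \<psi> (U - ?V) = stone_preimage \<psi> U - stone_preimage \<psi> ?V"
    by (auto simp: stone_preimage_def)
  ultimately have diff: "measure M (stone_preimage \<psi> (U - ?V)) = ?s - measure M (stone_preimage \<psi> ?V)"
    using finite_measure_Diff[OF sets[OF openin_stone_borel[OF U]] sets[OF V]] by simp
  have V_ge: "\<mu> (\<psi> (a k)) \<le> measure M (stone_preimage \<psi> ?V)" for k
  proof -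
    have "stone_preimage \<psi> (cl (a k)) \<subseteq> stone_preimage \<psi> ?V" by (auto simp: stone_preimage_def)
    then have "measure M (stone_preimage \<psi> (cl (a k))) \<le> measure M (stone_preimage \<psi> ?V)"
      by (rule finite_measure_mono[OF _ sets[OF V]])
    then show ?thesis by (simp add: stone_preimage_clopen[OF \<psi>] M(2))
  qed
  have "measure M (stone_preimage \<psi> (U - ?V)) \<le> inverse (real (Suc k))" for k
    using V_ge[of k] a(2)[of k] diff by linarith
  then have "measure M (stone_preimage \<psi> (U - ?V)) \<le> 0"
    by (intro LIMSEQ_le_const[OF LIMSEQ_inverse_real_of_nat]) blast
  moreover have "U - ?V \<in> borel_sets_of stone_top"
    using sets.Diff[of U stone_borel ?V] openin_stone_borel[OF U] V by (simp add: sets_stone_borel)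
  ultimately have "stone_preimage \<psi> (U - ?V) \<in> null_sets M"
    using sets by (auto simp: emeasure_eq_measure measure_le_0_iff)
  with a(1) show ?thesis by blast
qed

lemma stone_preimage_open_approx_countable:
  fixes \<Psi> :: "('a::boolean_algebra \<Rightarrow> 'b) set"
  assumes \<Psi>: "countable \<Psi>" "\<Psi> \<subseteq> Collect bool_hom" and U: "openin stone_top U"
  shows "\<exists>C. countable C \<and> (\<forall>c\<in>C. cl c \<subseteq> U) \<and>
    (\<forall>\<psi>\<in>\<Psi>. stone_preimage \<psi> (U - (\<Union>c\<in>C. cl c)) \<in> null_sets M)"
proof -
  define a where "a \<psi> = (SOME a :: nat \<Rightarrow> 'a. (\<forall>k. cl (a k) \<subseteq> U) \<and>
    stone_preimage \<psi> (U - (\<Union>k. cl (a k))) \<in> null_sets M)" for \<psi>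
  have a: "(\<forall>k. cl (a \<psi> k) \<subseteq> U) \<and> stone_preimage \<psi> (U - (\<Union>k. cl (a \<psi> k))) \<in> null_sets M"
    if "\<psi> \<in> \<Psi>" for \<psi>
    using \<Psi>(2) that unfolding a_def by (intro someI_ex[OF stone_preimage_open_approx[OF _ U]]) auto
  let ?C = "\<Union>\<psi>\<in>\<Psi>. range (a \<psi>)"
  have "countable ?C" using \<Psi>(1) by auto
  moreover have "cl c \<subseteq> U" if "c \<in> ?C" for c using a that by blast
  moreover have "stone_preimage \<psi> (U - (\<Union>c\<in>?C. cl c)) \<in> null_sets M" if "\<psi> \<in> \<Psi>" for \<psi>
  proof (rule null_sets_subset)
    show "stone_preimage \<psi> (U - (\<Union>k. cl (a \<psi> k))) \<in> null_sets M" using a that by blast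
    have "(\<Union>c\<in>?C. cl c) \<in> borel_sets_of stone_top"
      using openin_stone_clopen by (intro openin_stone_borel openin_Union) auto
    then have "U - (\<Union>c\<in>?C. cl c) \<in> borel_sets_of stone_top"
      using sets.Diff[of U stone_borel] openin_stone_borel[OF U] by (simp add: sets_stone_borel)
    then show "stone_preimage \<psi> (U - (\<Union>c\<in>?C. cl c)) \<in> sets M"
      using measurable_sets[OF measurable_stone_map_radon, of \<psi>] \<Psi>(2) that
      by (auto simp: vimage_stone_map_radon[symmetric] sets_stone_borel)
    show "stone_preimage \<psi> (U - (\<Union>c\<in>?C. cl c)) \<subseteq> stone_preimage \<psi> (U - (\<Union>k. cl (a \<psi> k)))"
      using that by (auto simp: stone_preimage_def)
  qed
  ultimately show ?thesis by blast
qed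

lemma unif_countably_additive_stone_preimageD:
  fixes \<phi>s :: "nat \<Rightarrow> 'a::boolean_algebra \<Rightarrow> 'b"
  assumes "unif_countably_additive stone_top (\<lambda>k E. measure M (stone_preimage (\<phi>s k) E))"
    and "range T \<subseteq> sets stone_borel" "decseq T" "(\<Inter>k. T k) = {}" "0 < e"
  shows "\<exists>K. \<forall>k\<ge>K. \<forall>n. measure M (stone_map (\<phi>s n) -` T k \<inter> space M) < e"
proof -
  have "\<forall>k. T k \<in> borel_sets_of stone_top" using assms(2) by (auto simp: sets_stone_borel)
  with assms(1,3-5) obtain K where "\<forall>k\<ge>K. \<forall>n. \<bar>measure M (stone_preimage (\<phi>s n) (T k))\<bar> < e"
    unfolding unif_countably_additive_def by blast
  then show ?thesis by (auto simp: vimage_stone_map_radon)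
qed

lemma tendsto_preimage_distance_stone_open:
  fixes \<phi>s :: "nat \<Rightarrow> 'a::boolean_algebra \<Rightarrow> 'b" and \<phi> :: "'a \<Rightarrow> 'b"
  assumes \<phi>s: "\<And>n. bool_hom (\<phi>s n)" and \<phi>: "bool_hom \<phi>"
    and clopen: "\<And>a. (\<lambda>n. preimage_distance M (stone_map (\<phi>s n)) (stone_map \<phi>) (cl a)) \<longlonglongrightarrow> 0"
    and uniform: "\<And>T e. range T \<subseteq> sets stone_borel \<Longrightarrow> decseq T \<Longrightarrow> (\<Inter>k. T k) = {} \<Longrightarrow> 0 < e \<Longrightarrow>
      \<exists>K. \<forall>k\<ge>K. \<forall>n. measure M (stone_map (\<phi>s n) -` T k \<inter> space M) < e"
    and U: "openin stone_top U"
  shows "(\<lambda>n. preimage_distance M (stone_map (\<phi>s n)) (stone_map \<phi>) U) \<longlonglongrightarrow> 0"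
proof -
  have fin: "finite_measure M" by (rule radon_on_finite_measure[OF M(1)])
  have meas: "stone_map (\<phi>s n) \<in> M \<rightarrow>\<^sub>M stone_borel" "stone_map \<phi> \<in> M \<rightarrow>\<^sub>M stone_borel" for n
    by (simp_all add: measurable_stone_map_radon \<phi>s \<phi>)
  have countable: "countable (insert \<phi> (range \<phi>s))"
    and homs: "insert \<phi> (range \<phi>s) \<subseteq> Collect bool_hom"
    using \<phi>s \<phi> by auto
  obtain C where C: "countable C" "\<forall>c\<in>C. cl c \<subseteq> U"
    "\<forall>\<psi>\<in>insert \<phi> (range \<phi>s). stone_preimage \<psi> (U - (\<Union>c\<in>C. cl c)) \<in> null_sets M"
    using stone_preimage_open_approx_countable[OF countable homs U] by blast
  define c where "c = from_nat_into (insert bot C)"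
  have range_c: "range c = insert bot C" unfolding c_def using C(1) by (intro range_from_nat_into) auto
  have "(\<Union>k. cl (c k)) = (\<Union>x\<in>range c. cl x)" by simp
  also have "\<dots> = (\<Union>x\<in>C. cl x)" unfolding range_c by simp
  finally have V: "(\<Union>k. cl (c k)) = (\<Union>x\<in>C. cl x)" .
  have clopens: "range (\<lambda>k. cl (c k)) \<subseteq> sets stone_borel"
    using openin_stone_borel[OF openin_stone_clopen] by (auto simp: sets_stone_borel)
  have "(\<lambda>n. preimage_distance M (stone_map (\<phi>s n)) (stone_map \<phi>) (\<Union>k. cl (c k))) \<longlonglongrightarrow> 0"
    by (rule tendsto_preimage_distance_Union[OF fin meas clopens clopen uniform])
  moreover have "sym_diff U (\<Union>k. cl (c k)) = U - (\<Union>x\<in>C. cl x)" using C(2) V by auto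
  then have "stone_map \<psi> -` sym_diff U (\<Union>k. cl (c k)) \<inter> space M \<in> null_sets M"
    if "\<psi> \<in> insert \<phi> (range \<phi>s)" for \<psi>
    using C(3) that by (auto simp: vimage_stone_map_radon)
  moreover have "U \<in> sets stone_borel" using openin_stone_borel[OF U] by (simp add: sets_stone_borel)
  moreover have "(\<Union>k. cl (c k)) \<in> sets stone_borel" using clopens by auto
  ultimately show ?thesis
    by (intro tendsto_preimage_distance_null_sym_diff[OF fin meas, of U "\<Union>k. cl (c k)"]) auto
qed

end

theorem proposition5p4:
  fixes \<mu> :: "'b::boolean_algebra \<Rightarrow> real"
    and \<phi>s :: "nat \<Rightarrow> 'a::boolean_algebra \<Rightarrow> 'b"
    and \<phi> :: "'a \<Rightarrow> 'b"
  assumes "metric_ba \<mu>"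
    and "\<And>n. bool_hom (\<phi>s n)"
    and "bool_hom \<phi>"
    and "pointwise_metric_conv \<mu> \<phi>s \<phi>"
    and "unif_countably_additive (stone_top :: 'a set topology)
           (\<lambda>k E. measure (radon_ext \<mu>) (stone_preimage (\<phi>s k) E))"
  shows "pointwise_borel_metric_conv \<mu> \<phi>s \<phi>"
proof -
  let ?d = "\<lambda>E n. preimage_distance (radon_ext \<mu>) (stone_map (\<phi>s n)) (stone_map \<phi>) E"
  note M = radon_ext_stone[OF assms(1)]
  note uniform = unif_countably_additive_stone_preimageD[OF assms(1) M assms(5)]
  have clopen: "?d (cl a) \<longlonglongrightarrow> 0" for a
    using assms(4) by (simp add: pointwise_metric_conv_def preimage_distance_stone_clopen[OF assms(1) M assms(2,3)])
  have opens: "?d U \<longlonglongrightarrow> 0" if "U \<in> {U. openin stone_top U}" for U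
  proof -
    from that have U: "openin stone_top U" by simp
    show ?thesis by (rule tendsto_preimage_distance_stone_open[OF assms(1) M assms(2,3) clopen uniform U])
  qed
  have borel: "sets stone_borel = sigma_sets (space stone_borel) {U. openin stone_top U}"
    by (simp add: sets_stone_borel space_stone_borel borel_sets_of_def)
  have "?d E \<longlonglongrightarrow> 0" if E: "E \<in> borel_sets_of stone_top" for E
  proof (rule tendsto_preimage_distance_sigma_sets[OF radon_on_finite_measure[OF M(1)]
        measurable_stone_map_radon[OF assms(1) M assms(2)] measurable_stone_map_radon[OF assms(1) M assms(3)]
        borel opens uniform])
    show "E \<in> sets stone_borel" using E by (simp add: sets_stone_borel)
  qed
  then show ?thesis
    unfolding pointwise_borel_metric_conv_def
    by (simp add: preimage_distance_def vimage_stone_map_radon[OF assms(1) M])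
qed

end
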